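(* Let $\varphi:[0,1]\to[0,\infty)$ be a decreasing function with $\varphi(t)>0$ for $0\le t<1$ and $\lim_{r\to1^-}\varphi(r)=0$. Then there exists a radial weight $\omega=\omega_\varphi$ such that $\widetilde{\omega}\notin\widehat{\mathcal{D}}$ but $A^p\subset A^p_\omega\subset A^p_\varphi$ for all $0<p<\infty$. Moreover, if $\varphi$ is differentiable and satisfies $-\varphi'(t)/\varphi(t)\le C/(1-t)$ for some constant $C>0$ and all $0\le t<1$, then $\varphi$ is a regular weight.
   Context: $\mathbb{D}$ is the unit disc, $\mathcal{H}(\mathbb{D})$ the analytic functions on $\mathbb{D}$, $dA=\frac{dx\,dy}{\pi}$. A radial weight is a non-negative $\omega\in L^1([0,1))$, extended by $\omega(z)=\omega(|z|)$, with $\widehat{\omega}(r)=\int_r^1\omega(s)\,ds>0$ for all $0\le r<1$. For $0<p<\infty$, $A^p_\omega$ is the space of $f\in\mathcal{H}(\mathbb{D})$ with $\int_{\mathbb{D}}|f|^p\omega\,dA<\infty$; $A^p$ denotes $A^p_\omega$ with $\omega\equiv1$. $\widetilde{\omega}(r)=\frac{\widehat{\omega}(r)}{1-r}$. A radial weight $\nu$ belongs to $\widehat{\mathcal{D}}$ if $\nu$ is integrable on $[0,1)$ and there is $C\ge1$ with $\widehat{\nu}(r)\le C\,\widehat{\nu}\big(\frac{1+r}{2}\big)$ for all $0\le r<1$ (so $\widetilde\omega\notin\widehat{\mathcal D}$ means either $\widetilde\omega$ is not integrable or this doubling condition fails). A radial weight $\omega$ is regular if $\omega(r)\asymp\frac{\widehat{\omega}(r)}{1-r}$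 for all $0\le r<1$. *)

theory Defs
  imports "HOL-Analysis.Analysis"
begin

text \<open>Radial weights are functions on [0,1) (real variable r), extended to the disc
by omega(z) = omega(|z|). Integrals on [0,1) are Henstock-Kurzweil integrals of
non-negative functions, hence coincide with Lebesgue integrals.\<close>

definition omega_hat :: "(real \<Rightarrow> real) \<Rightarrow> real \<Rightarrow> real" where
  "omega_hat \<omega> r = integral {r..<1} \<omega>"

definition omega_tilde :: "(real \<Rightarrow> real) \<Rightarrow> real \<Rightarrow> real" where
  "omega_tilde \<omega> r = omega_hat \<omega> r / (1 - r)"

definition radial_weight :: "(real \<Rightarrow> real) \<Rightarrow> bool" where
  "radial_weight \<omega> \<longleftrightarrow>
     (\<forall>r\<in>{0..<1}. 0 \<le> \<omega> r) \<and> \<omega> integrable_on {0..<1} \<and>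
     (\<forall>r\<in>{0..<1}. omega_hat \<omega> r > 0)"

definition D_hat :: "(real \<Rightarrow> real) \<Rightarrow> bool" where
  "D_hat \<nu> \<longleftrightarrow> radial_weight \<nu> \<and>
     (\<exists>C\<ge>1. \<forall>r\<in>{0..<1}. omega_hat \<nu> r \<le> C * omega_hat \<nu> ((1 + r) / 2))"

definition regular_weight :: "(real \<Rightarrow> real) \<Rightarrow> bool" where
  "regular_weight \<omega> \<longleftrightarrow> radial_weight \<omega> \<and>
     (\<exists>C>0. \<forall>r\<in>{0..<1}. omega_tilde \<omega> r \<le> C * \<omega> r \<and> \<omega> r \<le> C * omega_tilde \<omega> r)"

definition bergman :: "real \<Rightarrow> (real \<Rightarrow> real) \<Rightarrow> (complex \<Rightarrow> complex) set" where
  "bergman p \<omega> = {f. f holomorphic_on ball 0 1 \<and>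
     (\<integral>\<^sup>+ z \<in> ball 0 1. ennreal (norm (f z) powr p * \<omega> (norm z) / pi) \<partial>lborel) < \<infinity>}"

end

theory Submission
  imports Defs
begin

text \<open>
We take omega = phi + 1_A, where A is the union of the intervals [1 - d_k, 1 - d_k/2) with
d_k = 2^(-k^2). Since phi <= omega <= phi(0) + 1, the Bergman inclusions are immediate.
The tail integral of omega from s is at least d_k/4 for s in [1 - d_k, 1 - 3d_k/4], so the tail
integral of omega_tilde from 1 - d_k is at least d_k/16. From the midpoint 1 - d_k/2 on, A is
empty until 1 - d_(k+1), and d_(k+1)/d_k tends to 0 so fast that the tail integral of omega_tilde
from there is only d_k (phi(1 - d_k/2)/2 + 2^(-k)) = o(d_k); hence omega_tilde is not doubling.

For the second part, the bound on -phi'/phi makes phi(t)/(1 - t)^C increasing, so phi stays above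
2^(-C) phi(r) on [r, (1 + r)/2]; this gives phi <= 2^(C+1) phi_tilde, while phi_tilde <= phi
because phi decreases.
\<close>

lemma integral_Ico_eq_Icc: "integral {a..<b} (f::real \<Rightarrow> real) = integral {a..b} f"
  by (rule integral_spike_set; rule negligible_subset[OF negligible_sing[of b]]; auto)

lemma integrable_on_Ico_iff_Icc: "(f::real \<Rightarrow> real) integrable_on {a..<b} \<longleftrightarrow> f integrable_on {a..b}"
  by (rule integrable_spike_set_eq; rule negligible_subset[OF negligible_sing[of b]]; auto)

lemma omega_tilde_eq: "omega_tilde \<omega> r = integral {r..1} \<omega> / (1 - r)"
  by (simp add: omega_tilde_def omega_hat_def integral_Ico_eq_Icc)

lemma integral_indicator_Ico_subinterval:
  assumes "s \<le> c" "c \<le> d" "d \<le> t"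
  shows "integral {s..t} (indicat_real {c..<d}) = d - c"
    and "indicat_real {c..<d} integrable_on {s..t}"
proof -
  have "{c..<d} \<inter> {s..t} = {c..<d}" "{c..<d} \<in> lmeasurable"
    using assms by (auto intro: bounded_set_imp_lmeasurable)
  then show "integral {s..t} (indicat_real {c..<d}) = d - c"
    and "indicat_real {c..<d} integrable_on {s..t}"
    using assms by (simp_all add: integral_indicator integrable_on_indicator)
qed

lemma integral_le_const_real:
  fixes f :: "real \<Rightarrow> real"
  assumes "f integrable_on {a..b}" "a \<le> b" "\<And>x. x \<in> {a..b} \<Longrightarrow> f x \<le> c"
  shows "integral {a..b} f \<le> c * (b - a)"
  using integral_le[OF assms(1) integrable_const_ivl[of c a b]] assms by (simp add: mult.commute)

lemma integral_ge_on_subinterval: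
  fixes f :: "real \<Rightarrow> real"
  assumes f: "f integrable_on {s..t}" "\<And>x. x \<in> {s..t} \<Longrightarrow> 0 \<le> f x"
    and c: "\<And>x. x \<in> {a..<b} \<Longrightarrow> c \<le> f x"
    and sub: "s \<le> a" "a \<le> b" "b \<le> t"
  shows "c * (b - a) \<le> integral {s..t} f"
proof -
  have "integral {s..t} (\<lambda>x. c * indicat_real {a..<b} x) \<le> integral {s..t} f"
  proof (rule integral_le)
    show "(\<lambda>x. c * indicat_real {a..<b} x) integrable_on {s..t}"
      using integrable_cmul[OF integral_indicator_Ico_subinterval(2)[OF sub], of c] by simp
  qed (use f c sub in \<open>auto simp: indicator_def\<close>)
  then show ?thesis
    using integral_indicator_Ico_subinterval(1)[OF sub] by simp
qed

lemma decreasing_integrable_on: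
  fixes \<phi> :: "real \<Rightarrow> real"
  assumes "\<And>s t. s \<in> {a..b} \<Longrightarrow> t \<in> {a..b} \<Longrightarrow> s \<le> t \<Longrightarrow> \<phi> t \<le> \<phi> s"
  shows "\<phi> integrable_on {a..b}"
proof -
  have "mono_on {a..b} (\<lambda>t. - \<phi> t)"
    using assms by (auto simp: mono_on_def)
  then have "(\<lambda>t. - \<phi> t) integrable_on {a..b}"
    by (rule integrable_on_mono_on)
  then show ?thesis
    using integrable_neg by fastforce
qed

section \<open>The bump set\<close>

definition gap_scale :: "nat \<Rightarrow> real" where
  "gap_scale k = (1/2) ^ (k * k)"

definition bump_set :: "real set" where
  "bump_set = (\<Union>k. {1 - gap_scale k ..< 1 - gap_scale k / 2})"

definition bumped_weight :: "(real \<Rightarrow> real) \<Rightarrow> real \<Rightarrow> real" where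
  "bumped_weight \<phi> t = \<phi> t + indicator bump_set t"

lemma gap_scale_pos: "0 < gap_scale k"
  by (simp add: gap_scale_def)

lemma gap_scale_le_one: "gap_scale k \<le> 1"
  by (simp add: gap_scale_def power_le_one)

lemma gap_scale_antimono: "j \<le> k \<Longrightarrow> gap_scale k \<le> gap_scale j"
  unfolding gap_scale_def by (rule power_decreasing) (auto intro: mult_le_mono)

lemma gap_scale_Suc: "gap_scale (Suc k) = gap_scale k / (2 * 4 ^ k)"
proof -
  have "Suc k * Suc k = k * k + (2 * k + 1)"
    by simp
  then have "gap_scale (Suc k) = gap_scale k * ((1/2) ^ (2 * k) / 2)"
    unfolding gap_scale_def by (simp only: power_add) simp
  also have "(1/2 :: real) ^ (2 * k) = 1 / 4 ^ k"
    by (simp add: power_mult power_one_over)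
  finally show ?thesis
    by simp
qed

lemma gap_scale_tendsto_zero: "gap_scale \<longlonglongrightarrow> 0"
proof (rule Lim_null_comparison[OF _ LIMSEQ_power_zero[of "1/2 :: real"]])
  show "\<forall>\<^sub>F k in sequentially. norm (gap_scale k) \<le> (1/2) ^ k"
    unfolding gap_scale_def by (intro always_eventually allI) (simp add: power_decreasing le_square)
qed simp

lemma bump_set_sets_lebesgue: "bump_set \<in> sets lebesgue"
  unfolding bump_set_def by (intro sets.countable_UN) auto

lemma indicator_bump_set_integrable: "indicat_real bump_set integrable_on {a..b}"
  using bump_set_sets_lebesgue
  by (subst integrable_on_indicator) (intro bounded_set_imp_lmeasurable sets.Int, auto intro: bounded_Int)

lemma mem_bump_setI: "1 - gap_scale k \<le> t \<Longrightarrow> t < 1 - gap_scale k / 2 \<Longrightarrow> t \<in> bump_set"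
  unfolding bump_set_def by auto

lemma bump_set_subset: "bump_set \<subseteq> {0..<1}"
proof
  fix t assume "t \<in> bump_set"
  then obtain k where "1 - gap_scale k \<le> t" "t < 1 - gap_scale k / 2"
    unfolding bump_set_def by auto
  then show "t \<in> {0..<1}"
    using gap_scale_pos[of k] gap_scale_le_one[of k] by auto
qed

lemma bump_set_gap:
  assumes "t \<in> bump_set" "1 - gap_scale k / 2 \<le> t"
  shows "1 - gap_scale (Suc k) \<le> t"
proof -
  obtain j where j: "1 - gap_scale j \<le> t" "t < 1 - gap_scale j / 2"
    using assms(1) unfolding bump_set_def by auto
  show ?thesis
  proof (cases "j \<le> k")
    case True
    then show ?thesis
      using gap_scale_antimono[OF True] j assms(2) by auto
  next
    case False
    then show ?thesis
      using gap_scale_antimono[of "Suc k" j] j by auto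
  qed
qed

lemma integral_indicator_bump_set_le:
  assumes gap: "\<forall>t\<in>bump_set. m \<le> t \<longrightarrow> 1 - \<delta> \<le> t" "0 \<le> \<delta>" and s: "m \<le> s" "s \<le> 1"
  shows "integral {s..1} (indicat_real bump_set) \<le> min \<delta> (1 - s)"
proof -
  have le_length: "integral {s..1} (indicat_real bump_set) \<le> 1 - s"
    using integral_le_const_real[OF indicator_bump_set_integrable, of s 1 1] s
    by (simp add: indicator_def)
  have "integral {s..1} (indicat_real bump_set) \<le> \<delta>"
  proof (cases "s \<le> 1 - \<delta>")
    case True
    have "integral {s..1} (indicat_real bump_set) \<le> integral {s..1} (indicat_real {1 - \<delta>..<1})"
    proof (rule integral_le[OF indicator_bump_set_integrable])
      show "indicat_real {1 - \<delta>..<1} integrable_on {s..1}"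
        using True s gap(2) by (intro integral_indicator_Ico_subinterval(2)) auto
      show "indicat_real bump_set t \<le> indicat_real {1 - \<delta>..<1} t" if "t \<in> {s..1}" for t
        using that gap s bump_set_subset by (auto simp: indicator_def)
    qed
    also have "\<dots> = \<delta>"
      using True s gap(2) by (subst integral_indicator_Ico_subinterval(1)) auto
    finally show ?thesis .
  next
    case False
    then show ?thesis
      using le_length by linarith
  qed
  with le_length show ?thesis
    by simp
qed

section \<open>Decreasing weights and their bumped versions\<close>

locale decreasing_weight =
  fixes \<phi> :: "real \<Rightarrow> real"
  assumes nonneg: "\<forall>t\<in>{0..1}. 0 \<le> \<phi> t"
    and decr: "\<forall>s\<in>{0..1}. \<forall>t\<in>{0..1}. s \<le> t \<longrightarrow> \<phi> t \<le> \<phi> s"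
    and pos: "\<forall>t\<in>{0..<1}. 0 < \<phi> t"
begin

lemma integrable: "0 \<le> a \<Longrightarrow> b \<le> 1 \<Longrightarrow> \<phi> integrable_on {a..b}"
  using decr by (intro decreasing_integrable_on) auto

lemma integral_tail_le: "r \<in> {m..1} \<Longrightarrow> 0 \<le> m \<Longrightarrow> integral {r..1} \<phi> \<le> \<phi> m * (1 - r)"
  using decr by (intro integral_le_const_real integrable) auto

lemma radial_weight_if_ge:
  assumes ge: "\<And>t. t \<in> {0..1} \<Longrightarrow> \<phi> t \<le> f t" and f: "f integrable_on {0..1}"
  shows "radial_weight f"
  unfolding radial_weight_def
proof (intro conjI ballI)
  have f_nonneg: "0 \<le> f t" if "t \<in> {0..1}" for t
    using ge[OF that] nonneg that by (meson order_trans)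
  fix r :: real assume r: "r \<in> {0..<1}"
  then show "0 \<le> f r"
    by (intro f_nonneg) simp
  define m where "m = (1 + r) / 2"
  have m: "r \<le> m" "m < 1"
    using r by (auto simp: m_def)
  have "\<phi> m * (m - r) \<le> integral {r..1} f"
  proof (rule integral_ge_on_subinterval)
    show "f integrable_on {r..1}"
      using r by (intro integrable_subinterval_real[OF f]) auto
    show "0 \<le> f x" if "x \<in> {r..1}" for x
      using that r by (intro f_nonneg) auto
    show "\<phi> m \<le> f x" if "x \<in> {r..<m}" for x
      using that r m decr ge[of x] by (meson atLeastAtMost_iff atLeastLessThan_iff order_trans less_imp_le)
  qed (use m in auto)
  moreover have "0 < \<phi> m * (m - r)"
    using pos m r by (auto simp: m_def)
  ultimately show "0 < omega_hat f r"
    by (simp add: omega_hat_def integral_Ico_eq_Icc)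
qed (use f in \<open>simp add: integrable_on_Ico_iff_Icc\<close>)

lemma radial_weight_self: "radial_weight \<phi>"
  by (rule radial_weight_if_ge) (auto intro: integrable)

lemma bumped_weight_integrable: "0 \<le> a \<Longrightarrow> b \<le> 1 \<Longrightarrow> bumped_weight \<phi> integrable_on {a..b}"
  unfolding bumped_weight_def by (intro integrable_add integrable indicator_bump_set_integrable)

lemma bumped_weight_nonneg: "t \<in> {0..1} \<Longrightarrow> 0 \<le> bumped_weight \<phi> t"
  using nonneg by (auto simp: bumped_weight_def)

lemma ge_bumped_weight: "\<phi> t \<le> bumped_weight \<phi> t"
  by (simp add: bumped_weight_def)

lemma bumped_weight_le: "t \<in> {0..1} \<Longrightarrow> bumped_weight \<phi> t \<le> \<phi> 0 + 1"
  using decr[rule_format, of 0 t] by (auto simp: bumped_weight_def indicator_def)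

lemma radial_weight_bumped_weight: "radial_weight (bumped_weight \<phi>)"
  by (rule radial_weight_if_ge[OF ge_bumped_weight bumped_weight_integrable]) auto

lemma tilde_bumped_weight_nonneg: "s \<in> {0..1} \<Longrightarrow> 0 \<le> omega_tilde (bumped_weight \<phi>) s"
  unfolding omega_tilde_eq
  by (intro divide_nonneg_nonneg integral_nonneg bumped_weight_integrable bumped_weight_nonneg) auto

lemma tilde_bumped_weight_integrable:
  assumes r: "r \<in> {0..1}"
  shows "omega_tilde (bumped_weight \<phi>) integrable_on {r..1}"
proof -
  have "omega_tilde (bumped_weight \<phi>) integrable_on {r..<1}"
  proof (rule measurable_bounded_by_integrable_imp_integrable_real)
    have "continuous_on {0..1} (\<lambda>s. integral {s..1} (bumped_weight \<phi>))"
      using bumped_weight_integrable[of 0 1] by (intro indefinite_integral_continuous_1') auto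
    then have "continuous_on {r..<1} (\<lambda>s. integral {s..1} (bumped_weight \<phi>) / (1 - s))"
      using r by (intro continuous_on_divide continuous_intros) (auto elim: continuous_on_subset)
    then show "omega_tilde (bumped_weight \<phi>) \<in> borel_measurable (lebesgue_on {r..<1})"
      unfolding omega_tilde_eq[abs_def] by (rule continuous_imp_measurable_on_sets_lebesgue) auto
    show "(\<lambda>_. \<phi> 0 + 1) integrable_on {r..<1}"
      by (simp add: integrable_on_Ico_iff_Icc integrable_const_ivl)
    fix s assume s: "s \<in> {r..<1}"
    have "integral {s..1} (bumped_weight \<phi>) \<le> (\<phi> 0 + 1) * (1 - s)"
      using s r by (intro integral_le_const_real bumped_weight_integrable bumped_weight_le) auto
    then have "omega_tilde (bumped_weight \<phi>) s \<le> \<phi> 0 + 1"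
      using s by (simp add: omega_tilde_eq divide_le_eq)
    then show "\<bar>omega_tilde (bumped_weight \<phi>) s\<bar> \<le> \<phi> 0 + 1"
      using tilde_bumped_weight_nonneg[of s] s r by simp
  qed simp
  then show ?thesis
    by (simp add: integrable_on_Ico_iff_Icc)
qed

lemma omega_hat_tilde_bumped_weight_ge:
  "gap_scale k / 16 \<le> omega_hat (omega_tilde (bumped_weight \<phi>)) (1 - gap_scale k)"
proof -
  define d where "d = gap_scale k"
  have d: "0 < d" "d \<le> 1"
    using gap_scale_pos gap_scale_le_one by (auto simp: d_def)
  have tilde_ge: "1/4 \<le> omega_tilde (bumped_weight \<phi>) s" if s: "s \<in> {1 - d..<1 - 3 * d / 4}" for s
  proof -
    have "1 * ((1 - d / 2) - (1 - 3 * d / 4)) \<le> integral {s..1} (bumped_weight \<phi>)"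
    proof (rule integral_ge_on_subinterval)
      show "bumped_weight \<phi> integrable_on {s..1}"
        using s d by (intro bumped_weight_integrable) auto
      show "0 \<le> bumped_weight \<phi> x" if "x \<in> {s..1}" for x
        using that s d by (intro bumped_weight_nonneg) auto
      show "1 \<le> bumped_weight \<phi> x" if x: "x \<in> {1 - 3 * d / 4..<1 - d / 2}" for x
      proof -
        have "x \<in> bump_set"
          using x by (intro mem_bump_setI[of k]) (auto simp: d_def)
        then show ?thesis
          using nonneg x d by (auto simp: bumped_weight_def)
      qed
    qed (use s d in auto)
    moreover have "0 < 1 - s" "1 - s \<le> d"
      using s d by auto
    ultimately have "d / 4 \<le> (1 - s) * omega_tilde (bumped_weight \<phi>) s"
      by (simp add: omega_tilde_eq)
    also have "\<dots> \<le> d * omega_tilde (bumped_weight \<phi>) s"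
      using \<open>1 - s \<le> d\<close> s d by (intro mult_right_mono tilde_bumped_weight_nonneg) auto
    finally show ?thesis
      using d by (simp add: field_simps)
  qed
  have "1/4 * ((1 - 3 * d / 4) - (1 - d)) \<le> integral {1 - d..1} (omega_tilde (bumped_weight \<phi>))"
    using d tilde_ge
    by (intro integral_ge_on_subinterval tilde_bumped_weight_integrable tilde_bumped_weight_nonneg) auto
  then show ?thesis
    by (simp add: omega_hat_def integral_Ico_eq_Icc d_def)
qed

lemma omega_hat_tilde_bumped_weight_le:
  assumes m: "m \<in> {0..<1}" and gap: "\<forall>t\<in>bump_set. m \<le> t \<longrightarrow> 1 - \<delta> \<le> t" "0 \<le> \<delta>"
    and \<eta>: "0 < \<eta>" "\<eta> \<le> 1 - m"
  shows "omega_hat (omega_tilde (bumped_weight \<phi>)) m \<le> (\<phi> m + \<delta> / \<eta>) * (1 - m) + \<eta>"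
proof -
  define g where "g s = (\<phi> m + \<delta> / \<eta>) + indicat_real {1 - \<eta>..<1} s" for s
  have g_integral: "(g has_integral (\<phi> m + \<delta> / \<eta>) * (1 - m) + \<eta>) {m..1}"
    unfolding g_def
  proof (rule has_integral_add)
    show "((\<lambda>_. \<phi> m + \<delta> / \<eta>) has_integral (\<phi> m + \<delta> / \<eta>) * (1 - m)) {m..1}"
      using has_integral_const_real[of "\<phi> m + \<delta> / \<eta>" m 1] m by (simp add: mult.commute)
    show "(indicat_real {1 - \<eta>..<1} has_integral \<eta>) {m..1}"
      using integral_indicator_Ico_subinterval[of m "1 - \<eta>" 1 1] \<eta>
      by (simp add: has_integral_iff)
  qed
  have tilde_le: "omega_tilde (bumped_weight \<phi>) s \<le> g s" if s: "s \<in> {m..1}" for s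
  proof (cases "s = 1")
    case True
    \<comment> \<open>omega_tilde vanishes at 1, where it divides by 1 - s = 0\<close>
    then show ?thesis
      using nonneg m gap \<eta> by (simp add: omega_tilde_eq g_def)
  next
    case False
    then have s1: "0 < 1 - s"
      using s by auto
    have split: "integral {s..1} (bumped_weight \<phi>) = integral {s..1} \<phi> + integral {s..1} (indicat_real bump_set)"
      unfolding bumped_weight_def
      using s m by (intro integral_add integrable indicator_bump_set_integrable) auto
    have "integral {s..1} \<phi> / (1 - s) \<le> \<phi> m"
      using integral_tail_le[of s m] s m s1 by (simp add: divide_le_eq)
    moreover have "integral {s..1} (indicat_real bump_set) / (1 - s) \<le> \<delta> / \<eta> + indicat_real {1 - \<eta>..<1} s"
    proof (cases "s < 1 - \<eta>")
      case True
      have "integral {s..1} (indicat_real bump_set) / (1 - s) \<le> \<delta> / (1 - s)"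
        using integral_indicator_bump_set_le[OF gap, of s] s s1 by (intro divide_right_mono) auto
      also have "\<dots> \<le> \<delta> / \<eta>"
        using True gap(2) \<eta> by (intro divide_left_mono) auto
      finally show ?thesis
        using indicator_pos_le[of "{1 - \<eta>..<1}" s, where 'a = real] by linarith
    next
      case False
      have "integral {s..1} (indicat_real bump_set) / (1 - s) \<le> 1"
        using integral_indicator_bump_set_le[OF gap, of s] s s1 by (simp add: divide_le_eq)
      moreover have "0 \<le> \<delta> / \<eta>"
        using gap(2) \<eta> by simp
      moreover have "indicat_real {1 - \<eta>..<1} s = 1"
        using False s1 by simp
      ultimately show ?thesis
        by linarith
    qed
    ultimately show ?thesis
      by (simp add: omega_tilde_eq split add_divide_distrib g_def)
  qed
  have "integral {m..1} (omega_tilde (bumped_weight \<phi>)) \<le> integral {m..1} g"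
    using m g_integral tilde_le
    by (intro integral_le tilde_bumped_weight_integrable) (auto simp: has_integral_integrable)
  then show ?thesis
    using g_integral by (simp add: omega_hat_def integral_Ico_eq_Icc integral_unique)
qed

lemma omega_hat_tilde_bumped_weight_at_gap:
  "omega_hat (omega_tilde (bumped_weight \<phi>)) (1 - gap_scale k / 2)
     \<le> gap_scale k * (\<phi> (1 - gap_scale k / 2) / 2 + (1/2) ^ k)"
proof -
  define d where "d = gap_scale k"
  have d: "0 < d" "d \<le> 1"
    using gap_scale_pos gap_scale_le_one by (auto simp: d_def)
  have two_pow: "(1 :: real) \<le> 2 ^ k" "(4 :: real) ^ k = 2 ^ k * 2 ^ k"
    by (simp_all flip: power_mult_distrib)
  \<comment> \<open>eta = d / 2^(k+1) makes delta / eta = 2^(-k) for delta = gap_scale (Suc k)\<close>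
  have "omega_hat (omega_tilde (bumped_weight \<phi>)) (1 - d / 2)
      \<le> (\<phi> (1 - d / 2) + gap_scale (Suc k) / (d / (2 * 2 ^ k))) * (1 - (1 - d / 2)) + d / (2 * 2 ^ k)"
  proof (rule omega_hat_tilde_bumped_weight_le)
    show "\<forall>t\<in>bump_set. 1 - d / 2 \<le> t \<longrightarrow> 1 - gap_scale (Suc k) \<le> t"
      using bump_set_gap by (simp add: d_def)
    show "0 \<le> gap_scale (Suc k)"
      using gap_scale_pos less_imp_le by blast
    show "d / (2 * 2 ^ k) \<le> 1 - (1 - d / 2)"
      using d two_pow by (simp add: field_simps)
  qed (use d in auto)
  also have "gap_scale (Suc k) / (d / (2 * 2 ^ k)) = (1/2) ^ k"
    using d by (simp add: gap_scale_Suc two_pow(2) power_one_over d_def[symmetric] field_simps)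
  finally show ?thesis
    by (simp add: d_def[symmetric] power_one_over field_simps)
qed

lemma not_D_hat_tilde_bumped_weight:
  assumes lim: "(\<phi> \<longlongrightarrow> 0) (at_left 1)"
  shows "\<not> D_hat (omega_tilde (bumped_weight \<phi>))"
proof
  define \<nu> where "\<nu> = omega_tilde (bumped_weight \<phi>)"
  define m where "m k = 1 - gap_scale k / 2" for k
  assume "D_hat (omega_tilde (bumped_weight \<phi>))"
  then obtain C where "C \<ge> 1" and doubling: "\<forall>r\<in>{0..<1}. omega_hat \<nu> r \<le> C * omega_hat \<nu> ((1 + r) / 2)"
    unfolding D_hat_def \<nu>_def by auto
  have ratio: "1 / 16 \<le> C * (\<phi> (m k) / 2 + (1/2) ^ k)" for k
  proof -
    have d: "0 < gap_scale k" "gap_scale k \<le> 1"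
      by (rule gap_scale_pos gap_scale_le_one)+
    have "gap_scale k / 16 \<le> omega_hat \<nu> (1 - gap_scale k)"
      unfolding \<nu>_def by (rule omega_hat_tilde_bumped_weight_ge)
    also have "\<dots> \<le> C * omega_hat \<nu> ((1 + (1 - gap_scale k)) / 2)"
      using d by (intro doubling[rule_format]) simp
    also have "(1 + (1 - gap_scale k)) / 2 = m k"
      by (simp add: m_def field_simps)
    also have "C * omega_hat \<nu> (m k) \<le> C * (gap_scale k * (\<phi> (m k) / 2 + (1/2) ^ k))"
      using omega_hat_tilde_bumped_weight_at_gap[of k] \<open>C \<ge> 1\<close>
      unfolding \<nu>_def m_def by (intro mult_left_mono) auto
    finally have "gap_scale k * (1 / 16) \<le> gap_scale k * (C * (\<phi> (m k) / 2 + (1/2) ^ k))"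
      by (simp add: algebra_simps)
    then show ?thesis
      using d(1) by (rule mult_left_le_imp_le)
  qed
  have "m \<longlonglongrightarrow> 1 - 0 / 2"
    unfolding m_def by (intro tendsto_intros gap_scale_tendsto_zero) simp
  then have "filterlim m (at_left 1) sequentially"
    by (intro tendsto_imp_filterlim_at_left always_eventually) (auto simp: m_def gap_scale_pos)
  then have "(\<lambda>k. \<phi> (m k)) \<longlonglongrightarrow> 0"
    by (rule filterlim_compose[OF lim])
  then have "(\<lambda>k. C * (\<phi> (m k) / 2 + (1/2) ^ k)) \<longlonglongrightarrow> C * (0 / 2 + 0)"
    by (intro tendsto_intros LIMSEQ_power_zero) auto
  then have "1 / 16 \<le> C * (0 / 2 + (0::real))"
    using ratio by (intro LIMSEQ_le_const) auto
  then show False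
    by simp
qed

lemma ratio_powr_increasing:
  assumes der: "\<forall>t\<in>{0..<1}. (\<phi> has_real_derivative \<phi>' t) (at t within {0..<1})"
    and log_der: "\<forall>t\<in>{0..<1}. - \<phi>' t / \<phi> t \<le> C / (1 - t)"
    and rt: "0 \<le> r" "r \<le> t" "t < 1"
  shows "\<phi> r / (1 - r) powr C \<le> \<phi> t / (1 - t) powr C"
proof (rule DERIV_nonneg_imp_increasing_open[OF rt(2)])
  have "continuous_on {0..<1} \<phi>"
    unfolding continuous_on_eq_continuous_within using der DERIV_continuous by blast
  then show "continuous_on {r..t} (\<lambda>x. \<phi> x / (1 - x) powr C)"
    using rt by (intro continuous_intros) (auto elim: continuous_on_subset)
  fix x assume x: "r < x" "x < t"
  then have x01: "x \<in> {0<..<1}"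
    using rt by auto
  have "(\<phi> has_real_derivative \<phi>' x) (at x within {0..<1})"
    using der x01 by auto
  moreover have "at x within {0..<1} = at x"
    using x01 by (intro at_within_interior) auto
  ultimately have dx: "(\<phi> has_real_derivative \<phi>' x) (at x)"
    by simp
  define D where "D = (\<phi>' x * (1 - x) powr C - \<phi> x * (C * (1 - x) powr (C - 1) * (0 - 1)))
      / ((1 - x) powr C * (1 - x) powr C)"
  have "((\<lambda>x. \<phi> x / (1 - x) powr C) has_real_derivative D) (at x)"
    unfolding D_def by (rule derivative_eq_intros dx refl | use x01 in simp)+
  moreover have "0 \<le> D"
  proof -
    have "- \<phi>' x * (1 - x) \<le> C * \<phi> x"
      using log_der pos x01 by (auto simp: divide_simps)
    then have "0 \<le> (1 - x) powr (C - 1) * (\<phi>' x * (1 - x) + C * \<phi> x)"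
      by simp
    also have "\<dots> = \<phi>' x * (1 - x) powr C - \<phi> x * (C * (1 - x) powr (C - 1) * (0 - 1))"
    proof -
      have "(1 - x) powr C = (1 - x) powr (C - 1) * (1 - x)"
        using x01 by (simp add: powr_diff)
      then show ?thesis
        by (simp only:) (simp add: algebra_simps)
    qed
    finally show ?thesis
      unfolding D_def by simp
  qed
  ultimately show "\<exists>y. ((\<lambda>x. \<phi> x / (1 - x) powr C) has_real_derivative y) (at x) \<and> 0 \<le> y"
    by blast
qed

lemma regular_weight_if_log_derivative_le:
  assumes der: "\<forall>t\<in>{0..<1}. (\<phi> has_real_derivative \<phi>' t) (at t within {0..<1})"
    and log_der: "\<forall>t\<in>{0..<1}. - \<phi>' t / \<phi> t \<le> C / (1 - t)" and "C > 0"
  shows "regular_weight \<phi>"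
  unfolding regular_weight_def
proof (intro conjI radial_weight_self exI[of _ "2 * 2 powr C"] ballI)
  show "0 < 2 * 2 powr C"
    by simp
  fix r :: real assume r: "r \<in> {0..<1}"
  have tilde_le: "omega_tilde \<phi> r \<le> \<phi> r"
    using integral_tail_le[of r r] r by (simp add: omega_tilde_eq divide_le_eq)
  also have "\<dots> \<le> 2 * 2 powr C * \<phi> r"
    using \<open>C > 0\<close> pos r ge_one_powr_ge_zero[of 2 C] by simp
  finally show "omega_tilde \<phi> r \<le> 2 * 2 powr C * \<phi> r" .
  define m where "m = (1 + r) / 2"
  have m: "r \<le> m" "m < 1"
    using r by (auto simp: m_def)
  have "\<phi> r / 2 powr C * (m - r) \<le> integral {r..1} \<phi>"
  proof (rule integral_ge_on_subinterval)
    show "\<phi> r / 2 powr C \<le> \<phi> t" if t: "t \<in> {r..<m}" for t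
    proof -
      have "\<phi> r / 2 powr C = \<phi> r / (1 - r) powr C * ((1 - r) / 2) powr C"
        using r by (simp add: powr_divide)
      also have "\<dots> \<le> \<phi> t / (1 - t) powr C * (1 - t) powr C"
      proof (rule mult_mono)
        show "\<phi> r / (1 - r) powr C \<le> \<phi> t / (1 - t) powr C"
          using t r m by (intro ratio_powr_increasing[OF der log_der]) auto
        show "((1 - r) / 2) powr C \<le> (1 - t) powr C"
          using t r \<open>C > 0\<close> by (intro powr_mono2) (auto simp: m_def)
        show "0 \<le> \<phi> t / (1 - t) powr C"
          using t r m nonneg by (intro divide_nonneg_nonneg) auto
      qed simp
      also have "\<dots> = \<phi> t"
        using t m by simp
      finally show ?thesis .
    qed
  qed (use r m nonneg in \<open>auto intro: integrable\<close>)
  then have "\<phi> r / 2 powr C * ((1 - r) / 2) \<le> (1 - r) * omega_tilde \<phi> r"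
    using r by (simp add: m_def omega_tilde_eq)
  then have "(1 - r) * (\<phi> r / (2 * 2 powr C)) \<le> (1 - r) * omega_tilde \<phi> r"
    by (simp add: field_simps)
  then have "\<phi> r / (2 * 2 powr C) \<le> omega_tilde \<phi> r"
    by (rule mult_left_le_imp_le) (use r in simp)
  then show "\<phi> r \<le> 2 * 2 powr C * omega_tilde \<phi> r"
    by (simp add: pos_divide_le_eq ac_simps)
qed

end

section \<open>Inclusions of weighted Bergman spaces\<close>

lemma bergman_antimono:
  assumes "\<And>t. t \<in> {0..<1} \<Longrightarrow> v t \<le> w t"
  shows "bergman p w \<subseteq> bergman p v"
proof
  fix f assume f: "f \<in> bergman p w"
  have "(\<integral>\<^sup>+ z \<in> ball 0 1. ennreal (norm (f z) powr p * v (norm z) / pi) \<partial>lborel)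
      \<le> (\<integral>\<^sup>+ z \<in> ball 0 1. ennreal (norm (f z) powr p * w (norm z) / pi) \<partial>lborel)"
  proof (rule nn_integral_mono)
    fix z :: complex
    show "ennreal (norm (f z) powr p * v (norm z) / pi) * indicator (ball 0 1) z
        \<le> ennreal (norm (f z) powr p * w (norm z) / pi) * indicator (ball 0 1) z"
    proof (cases "z \<in> ball 0 1")
      case True
      then have "v (norm z) \<le> w (norm z)"
        by (intro assms) auto
      then have "norm (f z) powr p * v (norm z) / pi \<le> norm (f z) powr p * w (norm z) / pi"
        by (intro divide_right_mono mult_left_mono) auto
      then show ?thesis
        using True by (auto intro: ennreal_leI)
    qed auto
  qed
  then show "f \<in> bergman p v"
    using f unfolding bergman_def by auto
qed

lemma unweighted_bergman_subset:
  assumes "\<And>t. t \<in> {0..<1} \<Longrightarrow> w t \<le> B" "0 \<le> B"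
  shows "bergman p (\<lambda>_. 1) \<subseteq> bergman p w"
proof
  fix f assume f: "f \<in> bergman p (\<lambda>_. 1)"
  then have hol: "f holomorphic_on ball 0 1"
    by (simp add: bergman_def)
  define G where "G z = ennreal (norm (f z) powr p * 1 / pi) * indicator (ball 0 1) z" for z
  have "(\<lambda>z. indicator (ball 0 1) z *\<^sub>R f z) \<in> borel_measurable borel"
    using hol holomorphic_on_imp_continuous_on by (intro borel_measurable_continuous_on_indicator) auto
  then have "(\<lambda>z. ennreal (norm (indicator (ball 0 1) z *\<^sub>R f z) powr p / pi)) \<in> borel_measurable lborel"
    by measurable
  also have "(\<lambda>z. ennreal (norm (indicator (ball 0 1) z *\<^sub>R f z) powr p / pi)) = G"
    by (auto simp: G_def indicator_def fun_eq_iff)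
  finally have G_measurable: "G \<in> borel_measurable lborel" .
  have "(\<integral>\<^sup>+ z \<in> ball 0 1. ennreal (norm (f z) powr p * w (norm z) / pi) \<partial>lborel)
      \<le> (\<integral>\<^sup>+ z. ennreal B * G z \<partial>lborel)"
  proof (rule nn_integral_mono)
    fix z :: complex
    show "ennreal (norm (f z) powr p * w (norm z) / pi) * indicator (ball 0 1) z \<le> ennreal B * G z"
    proof (cases "z \<in> ball 0 1")
      case True
      then have "w (norm z) \<le> B"
        by (intro assms) auto
      then have "norm (f z) powr p * w (norm z) / pi \<le> B * (norm (f z) powr p * 1 / pi)"
        by (simp add: field_simps mult_right_mono)
      then show ?thesis
        using True assms(2) by (auto simp: G_def ennreal_mult[symmetric] intro: ennreal_leI)
    qed (auto simp: G_def)
  qed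
  also have "\<dots> = ennreal B * (\<integral>\<^sup>+ z. G z \<partial>lborel)"
    by (rule nn_integral_cmult[OF G_measurable])
  also have "\<dots> < \<infinity>"
    using f by (simp add: bergman_def G_def ennreal_mult_less_top)
  finally have "(\<integral>\<^sup>+ z \<in> ball 0 1. ennreal (norm (f z) powr p * w (norm z) / pi) \<partial>lborel) < \<infinity>" .
  then show "f \<in> bergman p w"
    using hol by (simp add: bergman_def)
qed

theorem theorem7:
  fixes \<phi> :: "real \<Rightarrow> real"
  assumes nonneg: "\<forall>t\<in>{0..1}. 0 \<le> \<phi> t"
    and decr: "\<forall>s\<in>{0..1}. \<forall>t\<in>{0..1}. s \<le> t \<longrightarrow> \<phi> t \<le> \<phi> s"
    and pos: "\<forall>t\<in>{0..<1}. 0 < \<phi> t"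
    and lim: "(\<phi> \<longlongrightarrow> 0) (at_left 1)"
  shows "(\<exists>\<omega>. radial_weight \<omega> \<and> \<not> D_hat (omega_tilde \<omega>) \<and>
            (\<forall>p>0. bergman p (\<lambda>_. 1) \<subseteq> bergman p \<omega> \<and> bergman p \<omega> \<subseteq> bergman p \<phi>))
       \<and> (\<forall>\<phi>'. ((\<forall>t\<in>{0..<1}. (\<phi> has_real_derivative \<phi>' t) (at t within {0..<1})) \<and>
                (\<exists>C>0. \<forall>t\<in>{0..<1}. - \<phi>' t / \<phi> t \<le> C / (1 - t)))
              \<longrightarrow> regular_weight \<phi>)"
proof (intro conjI allI impI)
  interpret decreasing_weight \<phi>
    using nonneg decr pos by unfold_locales
  show "\<exists>\<omega>. radial_weight \<omega> \<and> \<not> D_hat (omega_tilde \<omega>) \<and>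
      (\<forall>p>0. bergman p (\<lambda>_. 1) \<subseteq> bergman p \<omega> \<and> bergman p \<omega> \<subseteq> bergman p \<phi>)"
  proof (intro exI[of _ "bumped_weight \<phi>"] conjI allI impI)
    show "radial_weight (bumped_weight \<phi>)"
      by (rule radial_weight_bumped_weight)
    show "\<not> D_hat (omega_tilde (bumped_weight \<phi>))"
      using lim by (rule not_D_hat_tilde_bumped_weight)
    fix p :: real
    show "bergman p (\<lambda>_. 1) \<subseteq> bergman p (bumped_weight \<phi>)"
      using bumped_weight_le nonneg by (intro unweighted_bergman_subset[of _ "\<phi> 0 + 1"]) auto
    show "bergman p (bumped_weight \<phi>) \<subseteq> bergman p \<phi>"
      by (intro bergman_antimono ge_bumped_weight)
  qed
  fix \<phi>' :: "real \<Rightarrow> real"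
  assume "(\<forall>t\<in>{0..<1}. (\<phi> has_real_derivative \<phi>' t) (at t within {0..<1})) \<and>
    (\<exists>C>0. \<forall>t\<in>{0..<1}. - \<phi>' t / \<phi> t \<le> C / (1 - t))"
  then show "regular_weight \<phi>"
    using regular_weight_if_log_derivative_le by blast
qed

end
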